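(* Let $\epsilon\in(0,1/2)$, $\eta\in(\epsilon,1-\epsilon)^{2p}$, $\xi_1,\omega_1,\xi_2,\omega_2\in(\epsilon,1-\epsilon)$ with $\xi_1\omega_1=\xi_2\omega_2$, and $\pi$ an everywhere positive probability mass function on $\{0,1\}^p$. Then $p^{\mathrm{ARN}}_{(\xi_1\eta,\omega_1)}(\gamma,\gamma')=p^{\mathrm{ARN}}_{(\xi_2\eta,\omega_2)}(\gamma,\gamma')$ for all $\gamma,\gamma'\in\{0,1\}^p$.
   Context: $\eta=(A,D)$, $c\eta=(cA,cD)$. Neighbourhood indicator distribution: $p^{\mathrm{RN}}_{\xi\eta}(k\mid\gamma)=\prod_j p_j(k_j\mid\gamma_j)$ with $p_j(1\mid0)=\xi A_j$, $p_j(0\mid0)=1-\xi A_j$, $p_j(1\mid1)=\xi D_j$, $p_j(0\mid1)=1-\xi D_j$. $N(\gamma,k)=\{\gamma^*:\gamma^*_j=\gamma_j\ \forall j\text{ with }k_j=0\}$, $p_k=\sum_jk_j$, $d_H$ Hamming distance, $q^{\mathrm{THIN}}_{\omega,k}(\gamma,\gamma')=\omega^{d_H(\gamma,\gamma')}(1-\omega)^{p_k-d_H(\gamma,\gamma')}\mathbb{I}\{\gamma'\in N(\gamma,k)\}$. ARN acceptance $\alpha^{\mathrm{ARN}}_{(\xi\eta,\omega),k}(\gamma,\gamma')=\min\{1,\frac{\pi(\gamma')p^{\mathrm{RN}}_{\xi\eta}(k\mid\gamma')q^{\mathrm{THIN}}_{\omega,k}(\gamma',\gamma)}{\pi(\gamma)p^{\mathrm{RN}}_{\xi\eta}(k\mid\gamma)q^{\mathrm{THIN}}_{\omega,k}(\gamma,\gamma')}\}$;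 ARN kernel for $\gamma'\ne\gamma$: $p^{\mathrm{ARN}}_{(\xi\eta,\omega)}(\gamma,\gamma')=\sum_kp^{\mathrm{RN}}_{\xi\eta}(k\mid\gamma)q^{\mathrm{THIN}}_{\omega,k}(\gamma,\gamma')\alpha^{\mathrm{ARN}}_{(\xi\eta,\omega),k}(\gamma,\gamma')$, and $p^{\mathrm{ARN}}(\gamma,\gamma)=1-\sum_{\gamma'\ne\gamma}p^{\mathrm{ARN}}(\gamma,\gamma')$. *)

theory Defs
  imports "HOL-Analysis.Analysis"
begin

text \<open>Binary vectors in {0,1}^p are modelled as functions 'p \<Rightarrow> bool on a finite
  index type 'p (with CARD('p) = p); True = 1, False = 0.
  eta = (A, D) with A, D :: 'p \<Rightarrow> real; xi*eta = (xi*A, xi*D).\<close>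

definition pRN :: "real \<Rightarrow> ('p::finite \<Rightarrow> real) \<Rightarrow> ('p \<Rightarrow> real) \<Rightarrow> ('p \<Rightarrow> bool) \<Rightarrow> ('p \<Rightarrow> bool) \<Rightarrow> real" where
  "pRN xi A D k g = (\<Prod>j\<in>UNIV.
     (if g j then (if k j then xi * D j else 1 - xi * D j)
             else (if k j then xi * A j else 1 - xi * A j)))"

definition nbhd :: "('p::finite \<Rightarrow> bool) \<Rightarrow> ('p \<Rightarrow> bool) \<Rightarrow> ('p \<Rightarrow> bool) set" where
  "nbhd g k = {g'. \<forall>j. \<not> k j \<longrightarrow> g' j = g j}"

definition hamming :: "('p::finite \<Rightarrow> bool) \<Rightarrow> ('p \<Rightarrow> bool) \<Rightarrow> nat" where
  "hamming g g' = card {j. g j \<noteq> g' j}"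

definition pk :: "('p::finite \<Rightarrow> bool) \<Rightarrow> nat" where
  "pk k = card {j. k j}"

definition qTHIN :: "real \<Rightarrow> ('p::finite \<Rightarrow> bool) \<Rightarrow> ('p \<Rightarrow> bool) \<Rightarrow> ('p \<Rightarrow> bool) \<Rightarrow> real" where
  "qTHIN w k g g' = w ^ hamming g g' * (1 - w) ^ (pk k - hamming g g') *
     (if g' \<in> nbhd g k then 1 else 0)"

definition alphaARN :: "(('p::finite \<Rightarrow> bool) \<Rightarrow> real) \<Rightarrow> real \<Rightarrow> ('p \<Rightarrow> real) \<Rightarrow> ('p \<Rightarrow> real) \<Rightarrow> real
    \<Rightarrow> ('p \<Rightarrow> bool) \<Rightarrow> ('p \<Rightarrow> bool) \<Rightarrow> ('p \<Rightarrow> bool) \<Rightarrow> real" where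
  "alphaARN \<pi> xi A D w k g g' = min 1
     ((\<pi> g' * pRN xi A D k g' * qTHIN w k g' g) / (\<pi> g * pRN xi A D k g * qTHIN w k g g'))"

definition pARN_off :: "(('p::finite \<Rightarrow> bool) \<Rightarrow> real) \<Rightarrow> real \<Rightarrow> ('p \<Rightarrow> real) \<Rightarrow> ('p \<Rightarrow> real) \<Rightarrow> real
    \<Rightarrow> ('p \<Rightarrow> bool) \<Rightarrow> ('p \<Rightarrow> bool) \<Rightarrow> real" where
  "pARN_off \<pi> xi A D w g g' = (\<Sum>k\<in>UNIV.
     pRN xi A D k g * qTHIN w k g g' * alphaARN \<pi> xi A D w k g g')"

definition pARN :: "(('p::finite \<Rightarrow> bool) \<Rightarrow> real) \<Rightarrow> real \<Rightarrow> ('p \<Rightarrow> real) \<Rightarrow> ('p \<Rightarrow> real) \<Rightarrow> real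
    \<Rightarrow> ('p \<Rightarrow> bool) \<Rightarrow> ('p \<Rightarrow> bool) \<Rightarrow> real" where
  "pARN \<pi> xi A D w g g' =
     (if g' \<noteq> g then pARN_off \<pi> xi A D w g g'
      else 1 - (\<Sum>g''\<in>UNIV - {g}. pARN_off \<pi> xi A D w g g''))"

end

theory Submission
  imports Defs
begin

text \<open>Let S be the set of coordinates where \<gamma> and \<gamma>' differ, and a, b the \<eta>-entries selected
  by \<gamma>, \<gamma>'. Only indicators k \<supseteq> S contribute, and for them the proposal weight times the
  Metropolis-Hastings acceptance is min(\<Prod>(a j, j \<in> S), \<pi>(\<gamma>')/\<pi>(\<gamma>) \<Prod>(b j, j \<in> S)) times a
  product over coordinates. Summing over k factorises coordinatewise: each coordinate in S
  contributes \<xi>\<omega>, every other one \<xi>(1-\<omega>)a + (1 - \<xi>a) = 1 - \<xi>\<omega>a. So the off-diagonal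
  kernel, and hence the whole kernel, depends on (\<xi>,\<omega>) only through \<xi>\<omega>.\<close>

definition eta_at :: "('p \<Rightarrow> real) \<Rightarrow> ('p \<Rightarrow> real) \<Rightarrow> ('p \<Rightarrow> bool) \<Rightarrow> 'p \<Rightarrow> real" where
  "eta_at A D g j = (if g j then D j else A j)"

lemma mult_min_one_divide:
  fixes x y :: real
  assumes "0 \<le> x" "0 \<le> y"
  shows "x * min 1 (y / x) = min x y"
proof (cases "x = 0")
  case False
  with assms show ?thesis
    by (cases "y \<le> x") (auto simp: min_def field_simps)
qed (use assms in simp)

lemma sum_bool_funs_prod:
  fixes f :: "'p::finite \<Rightarrow> bool \<Rightarrow> real"
  shows "(\<Sum>k\<in>UNIV. \<Prod>j\<in>UNIV. f j (k j)) = (\<Prod>j\<in>UNIV. f j True + f j False)"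
proof -
  have "(\<Prod>j\<in>UNIV. f j True + f j False) = (\<Prod>j\<in>UNIV. \<Sum>y\<in>UNIV. f j y)"
    by (simp add: UNIV_bool add.commute)
  also have "\<dots> = (\<Sum>k\<in>PiE UNIV (\<lambda>_. UNIV). \<Prod>j\<in>UNIV. f j (k j))"
    by (rule prod_sum_PiE) auto
  finally show ?thesis by simp
qed

lemma prod_if_const_eq_power_card:
  fixes c :: real
  shows "(\<Prod>j\<in>(UNIV::'p::finite set). if P j then c else 1) = c ^ card {j. P j}"
  by (simp add: prod.If_cases Collect_conv_if)

lemma pRN_eta_at:
  "pRN xi A D k g = (\<Prod>j\<in>UNIV. if k j then xi * eta_at A D g j else 1 - xi * eta_at A D g j)"
  unfolding pRN_def eta_at_def by (rule prod.cong) auto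

lemma pRN_nonneg:
  assumes "0 \<le> xi" "xi \<le> 1" "\<forall>j. 0 \<le> A j \<and> A j \<le> 1" "\<forall>j. 0 \<le> D j \<and> D j \<le> 1"
  shows "0 \<le> pRN xi A D k g"
  unfolding pRN_def using assms by (intro prod_nonneg) (auto intro: mult_le_one)

lemma mem_nbhd_iff: "g' \<in> nbhd g k \<longleftrightarrow> {j. g j \<noteq> g' j} \<subseteq> {j. k j}"
  unfolding nbhd_def by auto

lemma qTHIN_sym: "qTHIN w k g g' = qTHIN w k g' g"
proof -
  have "hamming g g' = hamming g' g" unfolding hamming_def by (metis (full_types))
  moreover have "g' \<in> nbhd g k \<longleftrightarrow> g \<in> nbhd g' k" unfolding nbhd_def by auto
  ultimately show ?thesis unfolding qTHIN_def by simp
qed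

lemma qTHIN_eq_prod:
  assumes "g' \<in> nbhd g k"
  shows "qTHIN w k g g' = (\<Prod>j\<in>UNIV. if g j \<noteq> g' j then w else if k j then 1 - w else 1)"
proof -
  define S where "S = {j. g j \<noteq> g' j}"
  have S: "S \<subseteq> {j. k j}" using assms unfolding S_def mem_nbhd_iff .
  have "(\<Prod>j\<in>UNIV. if j \<in> S then w else if k j then 1 - w else 1)
      = (\<Prod>j\<in>UNIV. (if j \<in> S then w else 1) * (if j \<in> {j. k j} - S then 1 - w else 1))"
    by (rule prod.cong) auto
  also have "\<dots> = w ^ card S * (1 - w) ^ card ({j. k j} - S)"
    by (simp add: prod.distrib prod_if_const_eq_power_card set_diff_eq del: Collect_mem_eq)
  also have "\<dots> = qTHIN w k g g'"
    using assms S by (simp add: qTHIN_def hamming_def pk_def S_def card_Diff_subset)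
  finally show ?thesis unfolding S_def by simp
qed

lemma qTHIN_nonneg:
  assumes "0 \<le> w" "w \<le> 1"
  shows "0 \<le> qTHIN w k g g'"
  unfolding qTHIN_def using assms by simp

text \<open>Applied below to the \<eta>-entries selected by \<gamma> and by \<gamma>', which agree outside S, so the
  first factor on the right is the same for both.\<close>

lemma prod_indicator_mult_thinning:
  fixes e :: "'p::finite \<Rightarrow> real"
  assumes "S \<subseteq> {j. k j}"
  shows "(\<Prod>j\<in>UNIV. if k j then xi * e j else 1 - xi * e j)
           * (\<Prod>j\<in>UNIV. if j \<in> S then w else if k j then 1 - w else 1)
       = (\<Prod>j\<in>UNIV. if j \<in> S then xi * w else if k j then xi * (1 - w) * e j else 1 - xi * e j)
           * (\<Prod>j\<in>UNIV. if j \<in> S then e j else 1)"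
  unfolding prod.distrib[symmetric] by (rule prod.cong) (use assms in auto)

lemma pARN_off_summand:
  fixes \<pi> :: "('p::finite \<Rightarrow> bool) \<Rightarrow> real" and A D :: "'p \<Rightarrow> real" and g g' :: "'p \<Rightarrow> bool"
  defines "S \<equiv> {j. g j \<noteq> g' j}" and "a \<equiv> eta_at A D g" and "b \<equiv> eta_at A D g'"
  assumes w: "0 \<le> w" "w \<le> 1"
    and xi: "0 \<le> xi" "xi \<le> 1"
    and A: "\<forall>j. 0 \<le> A j \<and> A j \<le> 1" and D: "\<forall>j. 0 \<le> D j \<and> D j \<le> 1"
    and \<pi>: "0 < \<pi> g" "0 \<le> \<pi> g'"
  shows "pRN xi A D k g * qTHIN w k g g' * alphaARN \<pi> xi A D w k g g'
    = min (\<Prod>j\<in>UNIV. if j \<in> S then a j else 1) (\<pi> g' / \<pi> g * (\<Prod>j\<in>UNIV. if j \<in> S then b j else 1))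
      * (\<Prod>j\<in>UNIV. if j \<in> S then (if k j then xi * w else 0)
                    else if k j then xi * (1 - w) * a j else 1 - xi * a j)"
proof (cases "S \<subseteq> {j. k j}")
  case False
  then obtain j0 where "j0 \<in> S" "\<not> k j0" by auto
  then have "qTHIN w k g g' = 0" "(\<Prod>j\<in>UNIV. if j \<in> S then (if k j then xi * w else 0)
                    else if k j then xi * (1 - w) * a j else 1 - xi * a j) = 0"
    by (auto simp: qTHIN_def mem_nbhd_iff S_def intro!: bexI[of _ j0])
  then show ?thesis by simp
next
  case True
  define c where "c = (\<Prod>j\<in>UNIV. if j \<in> S then xi * w
                    else if k j then xi * (1 - w) * a j else 1 - xi * a j)"
  define Aa where "Aa = (\<Prod>j\<in>UNIV. if j \<in> S then a j else 1)"
  define Ab where "Ab = (\<Prod>j\<in>UNIV. if j \<in> S then b j else 1)"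
  define q where "q = qTHIN w k g g'"
  have a_bounds: "0 \<le> a j" "xi * a j \<le> 1" for j
    using xi A D by (auto simp: a_def eta_at_def intro: mult_le_one)
  have q_prod: "q = (\<Prod>j\<in>UNIV. if j \<in> S then w else if k j then 1 - w else 1)"
    using True by (simp add: q_def qTHIN_eq_prod mem_nbhd_iff S_def)
  have pRN_g: "pRN xi A D k g * q = c * Aa"
    unfolding pRN_eta_at q_prod c_def Aa_def a_def
    by (rule prod_indicator_mult_thinning[OF True])
  have "pRN xi A D k g' * q
      = (\<Prod>j\<in>UNIV. if j \<in> S then xi * w else if k j then xi * (1 - w) * b j else 1 - xi * b j) * Ab"
    unfolding pRN_eta_at q_prod Ab_def b_def
    by (rule prod_indicator_mult_thinning[OF True])
  also have "\<dots> = c * Ab"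
    unfolding c_def by (rule arg_cong2[where f = "(*)"], rule prod.cong)
      (auto simp: S_def a_def b_def eta_at_def)
  finally have pRN_g': "pRN xi A D k g' * q = c * Ab" .
  have c_nonneg: "0 \<le> c"
    unfolding c_def using xi w a_bounds by (intro prod_nonneg) auto
  have nonneg: "0 \<le> pRN xi A D k g" "0 \<le> pRN xi A D k g'" "0 \<le> q"
    using pRN_nonneg[OF xi A D] qTHIN_nonneg[OF w] by (auto simp: q_def)
  have "pRN xi A D k g * q * alphaARN \<pi> xi A D w k g g'
      = (\<pi> g * pRN xi A D k g * q) * min 1 ((\<pi> g' * pRN xi A D k g' * q) / (\<pi> g * pRN xi A D k g * q)) / \<pi> g"
    using \<pi> by (simp add: alphaARN_def q_def qTHIN_sym[of w k g' g])
  also have "\<dots> = min (\<pi> g * (pRN xi A D k g * q)) (\<pi> g' * (pRN xi A D k g' * q)) / \<pi> g"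
    using nonneg \<pi> by (subst mult_min_one_divide) (auto simp: mult.assoc)
  also have "\<dots> = min ((\<pi> g * c) * Aa) ((\<pi> g * c) * (\<pi> g' / \<pi> g * Ab)) / \<pi> g"
  proof -
    have "\<pi> g' * (c * Ab) = (\<pi> g * c) * (\<pi> g' / \<pi> g * Ab)" using \<pi> by simp
    then show ?thesis by (simp only: pRN_g pRN_g' mult.assoc)
  qed
  also have "\<dots> = min Aa (\<pi> g' / \<pi> g * Ab) * c"
  proof -
    have "min ((\<pi> g * c) * Aa) ((\<pi> g * c) * (\<pi> g' / \<pi> g * Ab))
        = (\<pi> g * c) * min Aa (\<pi> g' / \<pi> g * Ab)"
      using \<pi> c_nonneg by (simp add: min_mult_distrib_left)
    then show ?thesis using \<pi> by simp
  qed
  also have "c = (\<Prod>j\<in>UNIV. if j \<in> S then (if k j then xi * w else 0)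
                    else if k j then xi * (1 - w) * a j else 1 - xi * a j)"
    unfolding c_def using True by (intro prod.cong) auto
  finally show ?thesis unfolding Aa_def Ab_def q_def .
qed

lemma pARN_off_closed_form:
  fixes \<pi> :: "('p::finite \<Rightarrow> bool) \<Rightarrow> real" and A D :: "'p \<Rightarrow> real" and g g' :: "'p \<Rightarrow> bool"
  defines "S \<equiv> {j. g j \<noteq> g' j}" and "a \<equiv> eta_at A D g" and "b \<equiv> eta_at A D g'"
  assumes "0 \<le> w" "w \<le> 1"
    and "0 \<le> xi" "xi \<le> 1" "\<forall>j. 0 \<le> A j \<and> A j \<le> 1" "\<forall>j. 0 \<le> D j \<and> D j \<le> 1"
    and "0 < \<pi> g" "0 \<le> \<pi> g'"
  shows "pARN_off \<pi> xi A D w g g'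
    = min (\<Prod>j\<in>UNIV. if j \<in> S then a j else 1) (\<pi> g' / \<pi> g * (\<Prod>j\<in>UNIV. if j \<in> S then b j else 1))
      * (\<Prod>j\<in>UNIV. if j \<in> S then xi * w else 1 - xi * w * a j)"
proof -
  have "pARN_off \<pi> xi A D w g g'
      = min (\<Prod>j\<in>UNIV. if j \<in> S then a j else 1) (\<pi> g' / \<pi> g * (\<Prod>j\<in>UNIV. if j \<in> S then b j else 1))
        * (\<Sum>k\<in>UNIV. \<Prod>j\<in>UNIV. if j \<in> S then (if k j then xi * w else 0)
                    else if k j then xi * (1 - w) * a j else 1 - xi * a j)"
    unfolding pARN_off_def S_def a_def b_def
    by (simp add: pARN_off_summand assms sum_distrib_left)
  also have "(\<Sum>k\<in>UNIV. \<Prod>j\<in>UNIV. if j \<in> S then (if k j then xi * w else 0)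
                    else if k j then xi * (1 - w) * a j else 1 - xi * a j)
      = (\<Prod>j\<in>UNIV. if j \<in> S then xi * w else 1 - xi * w * a j)"
    by (subst sum_bool_funs_prod) (auto intro: prod.cong simp: algebra_simps)
  finally show ?thesis .
qed

theorem corollary1:
  fixes \<epsilon> xi1 w1 xi2 w2 :: real
    and A D :: "'p::finite \<Rightarrow> real"
    and \<pi> :: "('p \<Rightarrow> bool) \<Rightarrow> real"
  assumes "0 < \<epsilon>" "\<epsilon> < 1/2"
    and "\<forall>j. \<epsilon> < A j \<and> A j < 1 - \<epsilon>"
    and "\<forall>j. \<epsilon> < D j \<and> D j < 1 - \<epsilon>"
    and "\<epsilon> < xi1" "xi1 < 1 - \<epsilon>" "\<epsilon> < w1" "w1 < 1 - \<epsilon>"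
    and "\<epsilon> < xi2" "xi2 < 1 - \<epsilon>" "\<epsilon> < w2" "w2 < 1 - \<epsilon>"
    and "xi1 * w1 = xi2 * w2"
    and "\<forall>g. 0 < \<pi> g"
    and "(\<Sum>g\<in>UNIV. \<pi> g) = 1"
  shows "\<forall>g g'. pARN \<pi> xi1 A D w1 g g' = pARN \<pi> xi2 A D w2 g g'"
proof -
  have bounds: "0 \<le> w" "w \<le> 1" "0 \<le> xi" "xi \<le> 1"
    if "\<epsilon> < xi" "xi < 1 - \<epsilon>" "\<epsilon> < w" "w < 1 - \<epsilon>" for xi w
    using that assms(1) by linarith+
  have unit: "\<forall>j. 0 \<le> A j \<and> A j \<le> 1" "\<forall>j. 0 \<le> D j \<and> D j \<le> 1"
    using assms(1,3,4) by (smt (verit))+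
  have "pARN_off \<pi> xi1 A D w1 g g' = pARN_off \<pi> xi2 A D w2 g g'" for g g'
    using assms(14)
    by (simp only: pARN_off_closed_form[OF bounds[OF assms(5-8)] unit]
        pARN_off_closed_form[OF bounds[OF assms(9-12)] unit] less_imp_le assms(13))
  then show ?thesis unfolding pARN_def by simp
qed

end
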